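(* Consider an execution of the PermitBFT protocol during a phase of synchronous operation. If round $i$ is unified and its creator $u=v_{i\bmod n}$ is honest, then $u$ creates a block or issues a proposal in round $i$.
   Context: PermitBFT protocol. There are $n$ nodes $v_0,\dots,v_{n-1}$; exactly $f<n/3$ are byzantine, the remaining $n-f$ are honest and follow the protocol. A position is a finite set of blocks. A permit is a signed tuple $(r,p)$. A proof for $(r,p)$ is a set of $2f+1$ permits for $(r,p)$ from distinct nodes. A block of round $r$ is signed by the creator $v_{r\bmod n}$ and contains a proof for $(r,p)$. A proposal of round $r$ is a position together with at least $2f+1$ round-$r$ permits from distinct nodes. Honest node: round $:=0$, current $:=\{\text{genesis}\}$; each round with $c=\text{round}\bmod n$: (1) send permit (round, current) to $v_c$; (2) if it is $v_c$: start the creator timeout; once $2f+1$ permits of this round for one position $p$ are held, broadcast a block with this proof at $p$ and stop; if the creator timeout expires first, broadcast a proposal if at least $2f+1$ permits of this round are held, and stop; also stop upon receiving a block, proposal or $2f+1$ timeout messages of a later round; (3) repeat: upon receiving a block or proposal of a round $r'\ge$ round, set round $:=r'$ and current accordingly and go to (4); when the round timeout expires, broadcast timeout(round); if holding $2f+1$ timeout messages for some round $\ge$ round, jump to the largest such round, forward them, go to (4); (4) round $:=$ round$+1$. Synchronous operation: every message between honest nodes is delivered within a known bound $\Delta$, local timers are reliable, local computation takes no time, and $2\Delta<\text{creator timeout}<3\Delta$, $5\Delta<\text{round timeout}$. Let $r_{\max}(t)$ be the maximum round-variable value over honest nodes at time $t$; round $i$ starts at $T_i=\min\{t: r_{\max}(t)\ge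 i\}$; round $i$ is unified if all honest nodes start executing round $i$ within $[T_i,T_i+\Delta]$. *)

theory Defs
  imports Complex_Main "HOL-Library.FSet"
begin

text \<open>Nodes are the natural numbers 0..N-1 (node v_j is j); rounds are natural numbers;
  time is real.  The model is a small-step semantics of the whole system: honest nodes follow
  the protocol, byzantine nodes may send any message whose honest signatures they have seen,
  and the network/timers obey the synchrony assumptions from time GST on.\<close>

record cfg =
  N   :: nat
  F   :: nat
  Hon :: "nat set"
  D   :: real
  CT  :: real
  RT  :: real
  GST :: real

definition wf_cfg :: "cfg \<Rightarrow> bool" where
  "wf_cfg c \<longleftrightarrow> 3 * F c < N c \<and> Hon c \<subseteq> {..<N c} \<and> card (Hon c) = N c - F c
     \<and> 0 < D c \<and> 2 * D c < CT c \<and> CT c < 3 * D c \<and> 5 * D c < RT c"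

text \<open>Blocks: the genesis block, or a block of round r at position p carrying a proof for (r,p),
  represented by the set of (distinct) signers of its permits for (r,p).  The block of round r is
  signed by its creator v_(r mod n).\<close>

datatype blk = Genesis | Blk nat "blk fset" "nat fset"

type_synonym pos = "blk fset"

datatype msg =
    Permit nat nat pos                       \<comment> \<open>signer, round, position\<close>
  | BlockM blk
  | Proposal nat pos "(nat \<times> pos) fset"     \<comment> \<open>round r, position, round-r permits (signer, position)\<close>
  | TimeoutM nat nat                         \<comment> \<open>signer, round\<close>
  | TimeoutCert nat "nat fset"               \<comment> \<open>forwarded timeout messages of a round: round, signers\<close>

text \<open>Signatures contained in a message (used for unforgeability).\<close>
datatype sig = SPermit nat nat pos | SBlock blk | STimeout nat nat

fun blk_round :: "blk \<Rightarrow> nat" where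
  "blk_round Genesis = 0"
| "blk_round (Blk r p S) = r"

fun signer :: "cfg \<Rightarrow> sig \<Rightarrow> nat" where
  "signer c (SPermit j r p) = j"
| "signer c (SBlock b) = blk_round b mod N c"
| "signer c (STimeout j r) = j"

fun sigs :: "msg \<Rightarrow> sig set" where
  "sigs (Permit j r p) = {SPermit j r p}"
| "sigs (BlockM Genesis) = {SBlock Genesis}"
| "sigs (BlockM (Blk r p S)) = insert (SBlock (Blk r p S)) {SPermit j r p | j. j |\<in>| S}"
| "sigs (Proposal r q P) = {SPermit j r p | j p. (j, p) |\<in>| P}"
| "sigs (TimeoutM j r) = {STimeout j r}"
| "sigs (TimeoutCert r S) = {STimeout j r | j. j |\<in>| S}"

fun valid_msg :: "cfg \<Rightarrow> msg \<Rightarrow> bool" where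
  "valid_msg c (BlockM (Blk r p S)) \<longleftrightarrow> fcard S = 2 * F c + 1 \<and> fset S \<subseteq> {..<N c}"
| "valid_msg c (BlockM Genesis) \<longleftrightarrow> False"
| "valid_msg c (Proposal r q P) \<longleftrightarrow> fcard (fst |`| P) = fcard P \<and> 2 * F c + 1 \<le> fcard P
      \<and> fset (fst |`| P) \<subseteq> {..<N c}"
| "valid_msg c (TimeoutCert r S) \<longleftrightarrow> 2 * F c + 1 \<le> fcard S \<and> fset S \<subseteq> {..<N c}"
| "valid_msg c (Permit j r p) \<longleftrightarrow> j < N c"
| "valid_msg c (TimeoutM j r) \<longleftrightarrow> j < N c"

text \<open>Phase \<open>Cre d\<close>: step (2) (creator), creator timeout
  expiring at time d.  Phase \<open>Wt d b\<close>: step (3), round timeout expiring at d, b = timeout message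
  already broadcast.  The inbox holds all messages received so far.\<close>

datatype phase = Cre real | Wt real bool

record lst =
  rnd   :: nat
  cur   :: pos
  ph    :: phase
  inbox :: "msg set"

definition bcast :: "cfg \<Rightarrow> msg \<Rightarrow> (nat \<times> msg) set" where
  "bcast c m = {(j, m) | j. j < N c}"

text \<open>Entering round r with current position p at time t: step (1) sends the permit (r,p) to the
  creator v_(r mod n); the creator then runs step (2), every other node step (3).\<close>
definition enter :: "cfg \<Rightarrow> real \<Rightarrow> nat \<Rightarrow> lst \<Rightarrow> nat \<Rightarrow> pos \<Rightarrow> lst \<times> (nat \<times> msg) set" where
  "enter c t v s r p =
     (s\<lparr>rnd := r, cur := p,
        ph := (if v = r mod N c then Cre (t + CT c) else Wt (t + RT c) False)\<rparr>,
      {(r mod N c, Permit v r p)})"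

definition permits_for :: "cfg \<Rightarrow> msg set \<Rightarrow> nat \<Rightarrow> pos \<Rightarrow> nat set" where
  "permits_for c I r p = {j. j < N c \<and> Permit j r p \<in> I}"

definition permit_pairs :: "cfg \<Rightarrow> msg set \<Rightarrow> nat \<Rightarrow> (nat \<times> pos) set" where
  "permit_pairs c I r = {(j, p). j < N c \<and> Permit j r p \<in> I}"

definition tsigners :: "cfg \<Rightarrow> msg set \<Rightarrow> nat \<Rightarrow> nat set" where
  "tsigners c I r = {j. j < N c \<and> (TimeoutM j r \<in> I \<or>
      (\<exists>S. TimeoutCert r S \<in> I \<and> valid_msg c (TimeoutCert r S) \<and> j |\<in>| S))}"

definition later_evidence :: "cfg \<Rightarrow> msg set \<Rightarrow> nat \<Rightarrow> bool" where
  "later_evidence c I r \<longleftrightarrow>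
     (\<exists>b. BlockM b \<in> I \<and> valid_msg c (BlockM b) \<and> r < blk_round b)
   \<or> (\<exists>r' q P. Proposal r' q P \<in> I \<and> valid_msg c (Proposal r' q P) \<and> r < r')
   \<or> (\<exists>r'. r < r' \<and> 2 * F c + 1 \<le> card (tsigners c I r'))"

text \<open>One local action of honest node v at time t, from local state s to s', sending \<open>out\<close>
  (a set of (receiver, message) pairs).  These are all the protocol steps (2)--(4).\<close>
definition lact :: "cfg \<Rightarrow> real \<Rightarrow> nat \<Rightarrow> lst \<Rightarrow> lst \<Rightarrow> (nat \<times> msg) set \<Rightarrow> bool" where
  "lact c t v s s' out \<longleftrightarrow>
    (case ph s of
      Cre d \<Rightarrow>
        \<comment> \<open>(2) 2f+1 permits of this round for one position p: broadcast a block and stop\<close>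
        (\<exists>p S. fset S \<subseteq> permits_for c (inbox s) (rnd s) p \<and> fcard S = 2 * F c + 1
            \<and> s' = s\<lparr>ph := Wt (t + RT c) False\<rparr> \<and> out = bcast c (BlockM (Blk (rnd s) p S)))
        \<comment> \<open>(2) creator timeout expires: broadcast a proposal if 2f+1 permits are held, and stop\<close>
      \<or> (d \<le> t \<and> s' = s\<lparr>ph := Wt (t + RT c) False\<rparr> \<and>
          (if 2 * F c + 1 \<le> card (fst ` permit_pairs c (inbox s) (rnd s))
           then (\<exists>q P. fset P \<subseteq> permit_pairs c (inbox s) (rnd s) \<and> fcard (fst |`| P) = fcard P
                   \<and> 2 * F c + 1 \<le> fcard P \<and> out = bcast c (Proposal (rnd s) q P))
           else out = {}))
        \<comment> \<open>(2) stop upon a block, proposal or 2f+1 timeout messages of a later round\<close>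
      \<or> (later_evidence c (inbox s) (rnd s) \<and> s' = s\<lparr>ph := Wt (t + RT c) False\<rparr> \<and> out = {})
    | Wt d b \<Rightarrow>
        \<comment> \<open>(3) block of a round r' \<ge> round: round := r', current := its position plus the block, (4)\<close>
        (\<exists>bk. BlockM bk \<in> inbox s \<and> valid_msg c (BlockM bk) \<and> rnd s \<le> blk_round bk
            \<and> (case bk of Blk r p S \<Rightarrow> (s', out) = enter c t v s (Suc r) (finsert bk p)
                         | Genesis \<Rightarrow> False))
        \<comment> \<open>(3) proposal of a round r' \<ge> round: round := r', current := its position, (4)\<close>
      \<or> (\<exists>r' q P. Proposal r' q P \<in> inbox s \<and> valid_msg c (Proposal r' q P) \<and> rnd s \<le> r'
            \<and> (s', out) = enter c t v s (Suc r') q)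
        \<comment> \<open>(3) round timeout expires: broadcast timeout(round)\<close>
      \<or> (d \<le> t \<and> \<not> b \<and> s' = s\<lparr>ph := Wt d True\<rparr> \<and> out = bcast c (TimeoutM v (rnd s)))
        \<comment> \<open>(3) 2f+1 timeout messages for some round \<ge> round: jump to the largest such round,
            forward them, (4)\<close>
      \<or> (\<exists>r'' S out0. rnd s \<le> r'' \<and> 2 * F c + 1 \<le> card (tsigners c (inbox s) r'')
            \<and> (\<forall>r'. r'' < r' \<longrightarrow> card (tsigners c (inbox s) r') < 2 * F c + 1)
            \<and> fset S \<subseteq> tsigners c (inbox s) r'' \<and> fcard S = 2 * F c + 1
            \<and> (s', out0) = enter c t v s (Suc r'') (cur s)
            \<and> out = out0 \<union> bcast c (TimeoutCert r'' S)))"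

text \<open>Global state: current time, local states, in-flight messages to honest nodes
  (send time, sender, receiver, message), the signatures known to the adversary, and a log of all
  messages ever sent (send time, sender, receiver, message).\<close>
record gst =
  now    :: real
  ls     :: "nat \<Rightarrow> lst"
  flight :: "(real \<times> nat \<times> nat \<times> msg) set"
  known  :: "sig set"
  sent   :: "(real \<times> nat \<times> nat \<times> msg) set"

text \<open>Honest node v sends \<open>out\<close> at the current time.  Channels are authenticated and private:
  the adversary learns the signatures of exactly the messages sent to byzantine nodes.\<close>
definition emit :: "cfg \<Rightarrow> nat \<Rightarrow> (nat \<times> msg) set \<Rightarrow> gst \<Rightarrow> gst" where
  "emit c v out g = g\<lparr>
      flight := flight g \<union> {(now g, v, j, m) | j m. (j, m) \<in> out \<and> j \<in> Hon c},
      known := known g \<union> \<Union> {sigs m | j m. (j, m) \<in> out \<and> j \<notin> Hon c},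
      sent := sent g \<union> {(now g, v, j, m) | j m. (j, m) \<in> out}\<rparr>"

definition lst0 :: lst where
  "lst0 = \<lparr>rnd = 0, cur = {||}, ph = Wt 0 True, inbox = {}\<rparr>"

definition init :: "cfg \<Rightarrow> gst" where
  "init c = (let E = (\<lambda>v. enter c 0 v lst0 0 {|Genesis|}) in
     \<lparr>now = 0, ls = (\<lambda>v. fst (E v)),
      flight = {(0, v, j, m) | v j m. v \<in> Hon c \<and> (j, m) \<in> snd (E v) \<and> j \<in> Hon c},
      known = \<Union> {sigs m | v j m. v \<in> Hon c \<and> (j, m) \<in> snd (E v) \<and> j \<notin> Hon c},
      sent = {(0, v, j, m) | v j m. v \<in> Hon c \<and> (j, m) \<in> snd (E v)}\<rparr>)"

definition enabled :: "cfg \<Rightarrow> gst \<Rightarrow> nat \<Rightarrow> bool" where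
  "enabled c g v \<longleftrightarrow> (\<exists>s' out. lact c (now g) v (ls g v) s' out)"

inductive step :: "cfg \<Rightarrow> gst \<Rightarrow> gst \<Rightarrow> bool" for c where
  honest: "\<lbrakk> v \<in> Hon c; lact c (now g) v (ls g v) s' out \<rbrakk>
     \<Longrightarrow> step c g (emit c v out (g\<lparr>ls := (ls g)(v := s')\<rparr>))"
| deliver: "\<lbrakk> (t, a, j, m) \<in> flight g \<rbrakk>
     \<Longrightarrow> step c g (g\<lparr>flight := flight g - {(t, a, j, m)},
                      ls := (ls g)(j := (ls g j)\<lparr>inbox := insert m (inbox (ls g j))\<rparr>)\<rparr>)"
  \<comment> \<open>a byzantine node sends a message to an honest node; it cannot forge honest signatures\<close>
| byz: "\<lbrakk> b < N c; b \<notin> Hon c; j \<in> Hon c;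
          \<forall>x \<in> sigs m. signer c x < N c \<and> (signer c x \<in> Hon c \<longrightarrow> x \<in> known g) \<rbrakk>
     \<Longrightarrow> step c g (g\<lparr>flight := insert (now g, b, j, m) (flight g),
                      sent := insert (now g, b, j, m) (sent g)\<rparr>)"
  \<comment> \<open>time passes: local computation takes no time (no honest action is pending), timers are
      reliable, and from GST on, messages between honest nodes are delivered within Delta\<close>
| tick: "\<lbrakk> now g < t';
           \<forall>v \<in> Hon c. \<not> enabled c g v;
           \<forall>v \<in> Hon c. \<forall>d. ph (ls g v) = Cre d \<longrightarrow> t' \<le> d;
           \<forall>v \<in> Hon c. \<forall>d. ph (ls g v) = Wt d False \<longrightarrow> t' \<le> d;
           \<forall>s a j m. (s, a, j, m) \<in> flight g \<and> a \<in> Hon c \<and> j \<in> Hon c \<longrightarrow> t' \<le> max s (GST c) + D c \<rbrakk>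
     \<Longrightarrow> step c g (g\<lparr>now := t'\<rparr>)"

definition execution :: "cfg \<Rightarrow> (nat \<Rightarrow> gst) \<Rightarrow> bool" where
  "execution c \<rho> \<longleftrightarrow> \<rho> 0 = init c \<and> (\<forall>k. step c (\<rho> k) (\<rho> (Suc k)))
      \<and> (\<forall>T. \<exists>k. T \<le> now (\<rho> k))"

definition state_at :: "(nat \<Rightarrow> gst) \<Rightarrow> real \<Rightarrow> gst" where
  "state_at \<rho> t = \<rho> (GREATEST k. now (\<rho> k) \<le> t)"

definition rmax :: "cfg \<Rightarrow> (nat \<Rightarrow> gst) \<Rightarrow> real \<Rightarrow> nat" where
  "rmax c \<rho> t = Max ((\<lambda>v. rnd (ls (state_at \<rho> t) v)) ` Hon c)"

definition round_start :: "cfg \<Rightarrow> (nat \<Rightarrow> gst) \<Rightarrow> nat \<Rightarrow> real" where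
  "round_start c \<rho> i = Inf {t. 0 \<le> t \<and> i \<le> rmax c \<rho> t}"

definition starts_round :: "(nat \<Rightarrow> gst) \<Rightarrow> nat \<Rightarrow> nat \<Rightarrow> real \<Rightarrow> bool" where
  "starts_round \<rho> v i t \<longleftrightarrow> (i = 0 \<and> t = 0) \<or>
     (\<exists>k. now (\<rho> (Suc k)) = t \<and> rnd (ls (\<rho> k) v) \<noteq> i \<and> rnd (ls (\<rho> (Suc k)) v) = i)"

definition unified :: "cfg \<Rightarrow> (nat \<Rightarrow> gst) \<Rightarrow> nat \<Rightarrow> bool" where
  "unified c \<rho> i \<longleftrightarrow> (\<forall>v \<in> Hon c. \<exists>t. starts_round \<rho> v i t
      \<and> round_start c \<rho> i \<le> t \<and> t \<le> round_start c \<rho> i + D c)"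

definition block_or_proposal_of :: "nat \<Rightarrow> msg \<Rightarrow> bool" where
  "block_or_proposal_of i m \<longleftrightarrow>
     (\<exists>p S. m = BlockM (Blk i p S)) \<or> (\<exists>q P. m = Proposal i q P)"

end

theory Submission
  imports Defs
begin

(* Suppose the honest creator u of round i never sends a block or proposal of round i. Then, up
   to time T_i plus the round timeout, no honest node gets beyond round i and the only honest
   signatures of rounds >= i in circulation are round-i permits on their way to u (quiet_until):
   u never forwards these permits, no honest round-i timer expires before that time, and, since
   every quorum of 2f+1 signers contains an honest node, no valid block, proposal or timeout quorum
   of a round >= i can be formed. So u stays in its creator step until its creator timeout expires
   at t + CT > T_i + 2 Delta, where t <= T_i + Delta is when it entered round i. By then the
   round-i permits of all n - f >= 2f+1 honest nodes, each sent by time T_i + Delta, have reached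
   u, so u must broadcast a proposal. *)

lemma quorum_has_honest:
  assumes "wf_cfg c" "A \<subseteq> {..<N c}" "2 * F c + 1 \<le> card A"
  obtains j where "j \<in> A" "j \<in> Hon c"
proof -
  have "card ({..<N c} - Hon c) = F c"
    using assms(1) unfolding wf_cfg_def by (subst card_Diff_subset) (auto intro: finite_subset)
  then have "\<not> A \<subseteq> {..<N c} - Hon c"
    using assms(3) card_mono[of "{..<N c} - Hon c" A] by auto
  then show ?thesis using assms(2) that by blast
qed

definition round_evidence :: "cfg \<Rightarrow> msg set \<Rightarrow> nat \<Rightarrow> bool" where
  "round_evidence c I r \<longleftrightarrow>
     (\<exists>p S. BlockM (Blk r p S) \<in> I \<and> valid_msg c (BlockM (Blk r p S)))
   \<or> (\<exists>q P. Proposal r q P \<in> I \<and> valid_msg c (Proposal r q P))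
   \<or> 2 * F c + 1 \<le> card (tsigners c I r)"

lemma later_evidence_iff: "later_evidence c I r \<longleftrightarrow> (\<exists>r' > r. round_evidence c I r')"
proof
  assume "later_evidence c I r"
  then show "\<exists>r' > r. round_evidence c I r'"
    unfolding later_evidence_def round_evidence_def
    by (metis blk.exhaust blk_round.simps(2) valid_msg.simps(2))
qed (force simp: later_evidence_def round_evidence_def)

lemma ex_Blk_case:
  "(\<exists>bk. A bk \<and> B bk \<and> C bk \<and> (case bk of Genesis \<Rightarrow> False | Blk r p S \<Rightarrow> Q bk r p S))
   \<longleftrightarrow> (\<exists>r p S. A (Blk r p S) \<and> B (Blk r p S) \<and> C (Blk r p S) \<and> Q (Blk r p S) r p S)"
  by (metis blk.exhaust blk.simps(4,5))

lemma lact_cases [consumes 1, case_names block creator_timeout stop enter round_timeout]: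
  assumes "lact c t v s s' out"
  obtains
    (block) d p S where "ph s = Cre d" "rnd s' = rnd s" "ph s' = Wt (t + RT c) False"
      "out = bcast c (BlockM (Blk (rnd s) p S))"
  | (creator_timeout) d where "ph s = Cre d" "d \<le> t" "rnd s' = rnd s" "ph s' = Wt (t + RT c) False"
      "(\<exists>q P. out = bcast c (Proposal (rnd s) q P))
       \<or> card (fst ` permit_pairs c (inbox s) (rnd s)) < 2 * F c + 1 \<and> out = {}"
  | (stop) d where "ph s = Cre d" "later_evidence c (inbox s) (rnd s)" "rnd s' = rnd s"
      "ph s' = Wt (t + RT c) False" "out = {}"
  | (enter) d b r q X where "ph s = Wt d b" "rnd s \<le> r" "round_evidence c (inbox s) r"
      "rnd s' = Suc r" "ph s' = (if v = Suc r mod N c then Cre (t + CT c) else Wt (t + RT c) False)"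
      "out = insert (Suc r mod N c, Permit v (Suc r) q) X"
      "X = {} \<or> (\<exists>S. X = bcast c (TimeoutCert r S))"
  | (round_timeout) d where "ph s = Wt d False" "d \<le> t" "rnd s' = rnd s" "ph s' = Wt d True"
      "out = bcast c (TimeoutM v (rnd s))"
proof (cases "ph s")
  case (Cre d)
  from assms Cre consider
      (blk) p S where "s' = s\<lparr>ph := Wt (t + RT c) False\<rparr>" "out = bcast c (BlockM (Blk (rnd s) p S))"
    | (timeout) "d \<le> t" "s' = s\<lparr>ph := Wt (t + RT c) False\<rparr>"
        "(\<exists>q P. out = bcast c (Proposal (rnd s) q P))
         \<or> card (fst ` permit_pairs c (inbox s) (rnd s)) < 2 * F c + 1 \<and> out = {}"
    | (stop) "later_evidence c (inbox s) (rnd s)" "s' = s\<lparr>ph := Wt (t + RT c) False\<rparr>" "out = {}"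
    unfolding lact_def by (auto split: if_splits)
  then show ?thesis
  proof cases
    case blk
    with Cre show ?thesis by (intro that(1)) simp_all
  next
    case timeout
    with Cre show ?thesis by (intro that(2)) simp_all
  next
    case stop
    with Cre show ?thesis by (intro that(3)) simp_all
  qed
next
  case (Wt d b)
  from assms Wt consider
      (blk) r p S where "BlockM (Blk r p S) \<in> inbox s" "valid_msg c (BlockM (Blk r p S))"
        "rnd s \<le> r" "(s', out) = enter c t v s (Suc r) (finsert (Blk r p S) p)"
    | (proposal) r q P where "Proposal r q P \<in> inbox s" "valid_msg c (Proposal r q P)" "rnd s \<le> r"
        "(s', out) = enter c t v s (Suc r) q"
    | (timeout) "d \<le> t" "\<not> b" "s' = s\<lparr>ph := Wt d True\<rparr>" "out = bcast c (TimeoutM v (rnd s))"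
    | (cert) r S out0 where "rnd s \<le> r" "2 * F c + 1 \<le> card (tsigners c (inbox s) r)"
        "(s', out0) = enter c t v s (Suc r) (cur s)" "out = out0 \<union> bcast c (TimeoutCert r S)"
    unfolding lact_def ex_Blk_case by auto
  then show ?thesis
  proof cases
    case blk
    with Wt show ?thesis
      by (intro that(4)[of d b r "finsert (Blk r p S) p" "{}"]) (auto simp: enter_def round_evidence_def)
  next
    case proposal
    with Wt show ?thesis
      by (intro that(4)[of d b r q "{}"]) (auto simp: enter_def round_evidence_def)
  next
    case timeout
    with Wt show ?thesis by (intro that(5)) simp_all
  next
    case cert
    with Wt show ?thesis
      by (intro that(4)[of d b r "cur s" "bcast c (TimeoutCert r S)"]) (auto simp: enter_def round_evidence_def)
  qed
qed

lemma lact_inbox: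
  assumes "lact c t v s s' out"
  shows "inbox s' = inbox s"
proof (cases "ph s")
  case Wt
  with assms show ?thesis unfolding lact_def ex_Blk_case enter_def by auto
qed (use assms in \<open>auto simp: lact_def\<close>)

lemma lact_rnd_mono: "lact c t v s s' out \<Longrightarrow> rnd s \<le> rnd s'"
  by (cases rule: lact_cases) auto

lemma emit_simps [simp]:
  "now (emit c v out g) = now g" "ls (emit c v out g) = ls g"
  "flight (emit c v out g) = flight g \<union> {(now g, v, j, m) | j m. (j, m) \<in> out \<and> j \<in> Hon c}"
  "known (emit c v out g) = known g \<union> \<Union> {sigs m | j m. (j, m) \<in> out \<and> j \<notin> Hon c}"
  "sent (emit c v out g) = sent g \<union> {(now g, v, j, m) | j m. (j, m) \<in> out}"
  by (simp_all add: emit_def)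

lemma step_mono:
  assumes "step c g g'"
  shows "now g \<le> now g'" "rnd (ls g v) \<le> rnd (ls g' v)" "inbox (ls g v) \<subseteq> inbox (ls g' v)"
  using assms
  by (cases; auto dest: lact_rnd_mono lact_inbox)+

lemma step_local_change:
  assumes "step c g g'" "rnd (ls g' v) \<noteq> rnd (ls g v) \<or> ph (ls g' v) \<noteq> ph (ls g v)"
  obtains s' out where "v \<in> Hon c" "lact c (now g) v (ls g v) s' out" "ls g' v = s'"
    "g' = emit c v out (g\<lparr>ls := (ls g)(v := s')\<rparr>)"
  using assms
proof cases
  case (honest w s' out)
  with assms(2) that show ?thesis by (cases "w = v") auto
qed (use assms(2) in \<open>auto split: if_splits\<close>)

lemma init_simps:
  "now (init c) = 0"
  "ls (init c) v = lst0\<lparr>rnd := 0, cur := {|Genesis|},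
     ph := (if v = 0 then Cre (CT c) else Wt (RT c) False)\<rparr>"
  "flight (init c) = {(0, v, 0, Permit v 0 {|Genesis|}) | v. v \<in> Hon c \<and> 0 \<in> Hon c}"
  "known (init c) = \<Union> {sigs (Permit v 0 {|Genesis|}) | v. v \<in> Hon c \<and> 0 \<notin> Hon c}"
  by (auto simp: init_def enter_def Let_def)

definition flight_timely :: "cfg \<Rightarrow> gst \<Rightarrow> bool" where
  "flight_timely c g \<longleftrightarrow> (\<forall>s a j m. (s, a, j, m) \<in> flight g \<and> a \<in> Hon c \<and> j \<in> Hon c
     \<longrightarrow> now g \<le> max s (GST c) + D c)"

definition creator_invar :: "cfg \<Rightarrow> gst \<Rightarrow> bool" where
  "creator_invar c g \<longleftrightarrow> (\<forall>v \<in> Hon c. \<forall>d. ph (ls g v) = Cre d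
     \<longrightarrow> now g \<le> d \<and> v = rnd (ls g v) mod N c)"

lemma flight_timely_init: "wf_cfg c \<Longrightarrow> flight_timely c (init c)"
  by (auto simp: flight_timely_def init_simps wf_cfg_def)

lemma flight_timely_step:
  assumes "wf_cfg c" "step c g g'" "flight_timely c g"
  shows "flight_timely c g'"
  using assms(2,3)
proof cases
  case (byz b j m)
  then show ?thesis using assms(3) unfolding flight_timely_def by (auto; blast)
qed (use assms(1) in \<open>auto simp: flight_timely_def wf_cfg_def\<close>)

lemma creator_invar_init: "wf_cfg c \<Longrightarrow> creator_invar c (init c)"
  by (auto simp: creator_invar_def init_simps wf_cfg_def)

lemma creator_invar_step:
  assumes "wf_cfg c" "step c g g'" "creator_invar c g"
  shows "creator_invar c g'"
  using assms(2,3)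
proof cases
  case (honest v s' out)
  have "now g \<le> d \<and> v = rnd s' mod N c" if "ph s' = Cre d" for d
    using honest(3) that assms(1) by (cases rule: lact_cases) (auto simp: wf_cfg_def split: if_splits)
  with honest assms(3) show ?thesis unfolding creator_invar_def by auto
qed (auto simp: creator_invar_def)

fun sig_round :: "sig \<Rightarrow> nat" where
  "sig_round (SPermit j r p) = r"
| "sig_round (SBlock b) = blk_round b"
| "sig_round (STimeout j r) = r"

definition honest_sigs_below :: "cfg \<Rightarrow> nat \<Rightarrow> msg \<Rightarrow> bool" where
  "honest_sigs_below c i m \<longleftrightarrow> (\<forall>x \<in> sigs m. signer c x \<in> Hon c \<longrightarrow> sig_round x < i)"

definition pre_round_msg :: "cfg \<Rightarrow> nat \<Rightarrow> msg \<Rightarrow> bool" where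
  "pre_round_msg c i m \<longleftrightarrow> honest_sigs_below c i m \<or> (\<exists>j p. m = Permit j i p)"

lemma round_evidence_has_honest_sig:
  assumes "wf_cfg c" "round_evidence c I r"
  obtains m x where "m \<in> I" "\<forall>j r' p. m \<noteq> Permit j r' p" "x \<in> sigs m" "signer c x \<in> Hon c"
    "sig_round x = r"
proof -
  from assms(2) consider
      (block) p S where "BlockM (Blk r p S) \<in> I" "valid_msg c (BlockM (Blk r p S))"
    | (proposal) q P where "Proposal r q P \<in> I" "valid_msg c (Proposal r q P)"
    | (timeouts) "2 * F c + 1 \<le> card (tsigners c I r)"
    unfolding round_evidence_def by blast
  then show ?thesis
  proof cases
    case block
    then obtain j where j: "j |\<in>| S" "j \<in> Hon c"
      using quorum_has_honest[OF assms(1), of "fset S"] by (auto simp: fcard.rep_eq)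
    show ?thesis
      by (rule that[of "BlockM (Blk r p S)" "SPermit j r p"]) (use block(1) j in simp_all)
  next
    case proposal
    then obtain j where "j |\<in>| fst |`| P" "j \<in> Hon c"
      using quorum_has_honest[OF assms(1), of "fset (fst |`| P)"] by (auto simp: fcard.rep_eq)
    then obtain p where j: "(j, p) |\<in>| P" "j \<in> Hon c" by force
    show ?thesis
      by (rule that[of "Proposal r q P" "SPermit j r p"]) (use proposal(1) j in auto)
  next
    case timeouts
    moreover have "tsigners c I r \<subseteq> {..<N c}" by (auto simp: tsigners_def)
    ultimately obtain j where j: "j \<in> tsigners c I r" "j \<in> Hon c"
      using quorum_has_honest[OF assms(1)] by blast
    then consider "TimeoutM j r \<in> I" | S where "TimeoutCert r S \<in> I" "j |\<in>| S"
      unfolding tsigners_def by blast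
    then show ?thesis
    proof cases
      case 1
      show ?thesis by (rule that[of "TimeoutM j r" "STimeout j r"]) (use 1 j in simp_all)
    next
      case (2 S)
      show ?thesis by (rule that[of "TimeoutCert r S" "STimeout j r"]) (use 2 j in simp_all)
    qed
  qed
qed

lemma pre_round_no_evidence:
  assumes "wf_cfg c" "\<forall>m \<in> I. pre_round_msg c i m" "round_evidence c I r"
  shows "r < i"
proof -
  obtain m x where m: "m \<in> I" "\<forall>j r' p. m \<noteq> Permit j r' p" "x \<in> sigs m" "signer c x \<in> Hon c"
    "sig_round x = r"
    using round_evidence_has_honest_sig[OF assms(1,3)] .
  then have "honest_sigs_below c i m" using assms(2) unfolding pre_round_msg_def by blast
  with m show ?thesis unfolding honest_sigs_below_def by blast
qed

lemma pre_round_no_later_evidence: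
  assumes "wf_cfg c" "\<forall>m \<in> I. pre_round_msg c i m"
  shows "\<not> later_evidence c I i"
  unfolding later_evidence_iff using pre_round_no_evidence[OF assms] by fastforce

definition safe_output :: "cfg \<Rightarrow> nat \<Rightarrow> (nat \<times> msg) set \<Rightarrow> bool" where
  "safe_output c i out \<longleftrightarrow>
     (\<forall>(j, m) \<in> out. pre_round_msg c i m \<and> (j \<notin> Hon c \<longrightarrow> honest_sigs_below c i m))"

lemma safe_output_empty [simp]: "safe_output c i {}"
  by (simp add: safe_output_def)

lemma safe_output_bcast: "honest_sigs_below c i m \<Longrightarrow> safe_output c i (bcast c m)"
  by (auto simp: safe_output_def pre_round_msg_def bcast_def)

lemma safe_output_bcast_block_or_proposal:
  assumes "block_or_proposal_of r m" "r < i"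
  shows "safe_output c i (bcast c m)"
  using assms by (intro safe_output_bcast) (auto simp: block_or_proposal_of_def honest_sigs_below_def)

lemma safe_output_enter:
  assumes "Suc r \<le> i" "i mod N c \<in> Hon c" "X = {} \<or> (\<exists>S. X = bcast c (TimeoutCert r S))"
  shows "safe_output c i (insert (Suc r mod N c, Permit v (Suc r) q) X)"
proof -
  have "safe_output c i {(Suc r mod N c, Permit v (Suc r) q)}"
    using assms(1,2) by (cases "Suc r = i") (auto simp: safe_output_def pre_round_msg_def honest_sigs_below_def)
  moreover have "safe_output c i X"
    using assms(1,3) by (auto intro!: safe_output_bcast simp: honest_sigs_below_def)
  ultimately show ?thesis unfolding safe_output_def by blast
qed

definition quiet_until :: "cfg \<Rightarrow> nat \<Rightarrow> real \<Rightarrow> gst \<Rightarrow> bool" where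
  "quiet_until c i B g \<longleftrightarrow>
     (\<forall>v \<in> Hon c. rnd (ls g v) \<le> i)
   \<and> (\<forall>x \<in> known g. signer c x \<in> Hon c \<longrightarrow> sig_round x < i)
   \<and> (\<forall>(s, a, j, m) \<in> flight g. pre_round_msg c i m)
   \<and> (\<forall>v. \<forall>m \<in> inbox (ls g v). pre_round_msg c i m)
   \<and> (\<forall>v \<in> Hon c. rnd (ls g v) = i \<longrightarrow> (\<forall>d b. ph (ls g v) = Wt d b \<longrightarrow> B \<le> d \<and> \<not> b))"

lemma quiet_until_frame:
  assumes quiet: "quiet_until c i B g"
    and "\<And>w. rnd (ls g' w) = rnd (ls g w)" "\<And>w. ph (ls g' w) = ph (ls g w)" "known g' = known g"
    and flight: "\<And>s a j m. (s, a, j, m) \<in> flight g' \<Longrightarrow> (s, a, j, m) \<in> flight g \<or> pre_round_msg c i m"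
    and inbox: "\<And>w m. m \<in> inbox (ls g' w) \<Longrightarrow> m \<in> inbox (ls g w) \<or> pre_round_msg c i m"
  shows "quiet_until c i B g'"
  unfolding quiet_until_def
proof (intro conjI)
  show "\<forall>(s, a, j, m) \<in> flight g'. pre_round_msg c i m"
    using quiet flight unfolding quiet_until_def by fast
  show "\<forall>w. \<forall>m \<in> inbox (ls g' w). pre_round_msg c i m"
    using quiet inbox unfolding quiet_until_def by blast
next
  show "\<forall>w \<in> Hon c. rnd (ls g' w) = i \<longrightarrow> (\<forall>d b. ph (ls g' w) = Wt d b \<longrightarrow> B \<le> d \<and> \<not> b)"
    using quiet assms(2,3) unfolding quiet_until_def by metis
qed (use quiet assms(2-4) in \<open>simp_all add: quiet_until_def\<close>)

lemma quiet_until_emit: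
  assumes quiet: "quiet_until c i B g" and "rnd s' \<le> i" "inbox s' = inbox (ls g v)"
    and safe: "safe_output c i out"
    and timer: "rnd s' = i \<longrightarrow> (\<forall>d b. ph s' = Wt d b \<longrightarrow> B \<le> d \<and> \<not> b)"
  shows "quiet_until c i B (emit c v out (g\<lparr>ls := (ls g)(v := s')\<rparr>))" (is "quiet_until c i B ?g'")
  unfolding quiet_until_def
proof (intro conjI)
  show "\<forall>x \<in> known ?g'. signer c x \<in> Hon c \<longrightarrow> sig_round x < i"
    using quiet safe unfolding quiet_until_def safe_output_def honest_sigs_below_def by auto
  show "\<forall>(s, a, j, m) \<in> flight ?g'. pre_round_msg c i m"
    using quiet safe unfolding quiet_until_def safe_output_def by auto
  show "\<forall>w \<in> Hon c. rnd (ls ?g' w) = i \<longrightarrow> (\<forall>d b. ph (ls ?g' w) = Wt d b \<longrightarrow> B \<le> d \<and> \<not> b)"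
  proof (intro ballI impI allI)
    fix w d b assume w: "w \<in> Hon c" "rnd (ls ?g' w) = i" "ph (ls ?g' w) = Wt d b"
    show "B \<le> d \<and> \<not> b"
    proof (cases "w = v")
      case False
      then have "rnd (ls g w) = i" "ph (ls g w) = Wt d b" using w by simp_all
      with quiet w(1) show ?thesis unfolding quiet_until_def by blast
    qed (use w timer in simp)
  qed
qed (use quiet assms(2,3) in \<open>simp_all add: quiet_until_def\<close>)

locale run =
  fixes c :: cfg and \<rho> :: "nat \<Rightarrow> gst"
  assumes wf: "wf_cfg c" and execution: "execution c \<rho>"
begin

lemma run_step: "step c (\<rho> k) (\<rho> (Suc k))"
  and run_init: "\<rho> 0 = init c"
  and time_unbounded: "\<exists>k. T \<le> now (\<rho> k)"
  using execution unfolding execution_def by blast+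

lemma now_mono: "k \<le> k' \<Longrightarrow> now (\<rho> k) \<le> now (\<rho> k')"
  by (rule lift_Suc_mono_le[of "\<lambda>k. now (\<rho> k)"]) (use step_mono[OF run_step] in auto)

lemma rnd_mono: "k \<le> k' \<Longrightarrow> rnd (ls (\<rho> k) v) \<le> rnd (ls (\<rho> k') v)"
  by (rule lift_Suc_mono_le[of "\<lambda>k. rnd (ls (\<rho> k) v)"]) (use step_mono[OF run_step] in auto)

lemma inbox_mono: "k \<le> k' \<Longrightarrow> inbox (ls (\<rho> k) v) \<subseteq> inbox (ls (\<rho> k') v)"
  by (rule lift_Suc_mono_le[of "\<lambda>k. inbox (ls (\<rho> k) v)"]) (use step_mono[OF run_step] in auto)

lemma now_nonneg: "0 \<le> now (\<rho> k)"
  using now_mono[of 0 k] by (simp add: run_init init_simps)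

lemma flight_timely_run: "flight_timely c (\<rho> k)"
  by (induction k) (auto simp: run_init flight_timely_init[OF wf] intro: flight_timely_step[OF wf run_step])

lemma creator_invar_run: "creator_invar c (\<rho> k)"
  by (induction k) (auto simp: run_init creator_invar_init[OF wf] intro: creator_invar_step[OF wf run_step])

lemma in_flight_or_received:
  assumes "(s, a, j, m) \<in> flight (\<rho> k0)" "k0 \<le> k"
  shows "(s, a, j, m) \<in> flight (\<rho> k) \<or> m \<in> inbox (ls (\<rho> k) j)"
  using assms(2)
proof (induction k rule: dec_induct)
  case (step k)
  have "inbox (ls (\<rho> k) j) \<subseteq> inbox (ls (\<rho> (Suc k)) j)" using inbox_mono[of k "Suc k"] by simp
  from run_step[of k] show ?case
  proof cases
    case (deliver t a' j' m')
    with step.IH show ?thesis by (cases "(t, a', j', m') = (s, a, j, m)") auto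
  qed (use step.IH \<open>inbox (ls (\<rho> k) j) \<subseteq> _\<close> in auto)
qed (use assms(1) in simp)

lemma received_after_deadline:
  assumes "(s, a, j, m) \<in> flight (\<rho> k0)" "k0 \<le> k" "a \<in> Hon c" "j \<in> Hon c"
    "max s (GST c) + D c < now (\<rho> k)"
  shows "m \<in> inbox (ls (\<rho> k) j)"
  using in_flight_or_received[OF assms(1,2)] flight_timely_run[of k] assms(3-5)
  unfolding flight_timely_def by force

lemma creator_phase_ends:
  assumes "v \<in> Hon c" "ph (ls (\<rho> k0) v) = Cre d" "rnd (ls (\<rho> k0) v) = r"
  obtains k where "k0 \<le> k" "ph (ls (\<rho> k) v) = Cre d" "rnd (ls (\<rho> k) v) = r"
    "\<not> (ph (ls (\<rho> (Suc k)) v) = Cre d \<and> rnd (ls (\<rho> (Suc k)) v) = r)"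
proof -
  define stays where "stays n \<longleftrightarrow> ph (ls (\<rho> (k0 + n)) v) = Cre d \<and> rnd (ls (\<rho> (k0 + n)) v) = r" for n
  obtain k1 where k1: "d + 1 \<le> now (\<rho> k1)" using time_unbounded by blast
  have "\<not> stays (k1 - k0)"
  proof
    assume "stays (k1 - k0)"
    then have "now (\<rho> (k0 + (k1 - k0))) \<le> d"
      using creator_invar_run assms(1) unfolding creator_invar_def stays_def by blast
    moreover have "now (\<rho> k1) \<le> now (\<rho> (k0 + (k1 - k0)))" by (rule now_mono) simp
    ultimately show False using k1 by simp
  qed
  then obtain n where "stays n" "\<not> stays (Suc n)"
    using exists_least_lemma[of "\<lambda>n. \<not> stays n"] assms(2,3) unfolding stays_def by auto
  then show ?thesis using that[of "k0 + n"] unfolding stays_def by simp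
qed

end

locale unified_run = run +
  fixes i :: nat
  assumes unified: "unified c \<rho> i"
    and synchronous: "GST c \<le> round_start c \<rho> i"
    and creator_honest: "i mod N c \<in> Hon c"
begin

abbreviation "Ti \<equiv> round_start c \<rho> i"
abbreviation "u \<equiv> i mod N c"

lemma round_start_le_now:
  assumes "v \<in> Hon c" "i \<le> rnd (ls (\<rho> k) v)"
  shows "Ti \<le> now (\<rho> k)"
proof -
  obtain t where t: "starts_round \<rho> v i t" "Ti \<le> t"
    using unified assms(1) unfolding unified_def by blast
  show ?thesis
  proof (cases "i = 0 \<and> t = 0")
    case True
    with t(2) now_nonneg[of k] show ?thesis by simp
  next
    case False
    then obtain k' where k': "now (\<rho> (Suc k')) = t" "rnd (ls (\<rho> k') v) \<noteq> i"
      "rnd (ls (\<rho> (Suc k')) v) = i"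
      using t(1) unfolding starts_round_def by blast
    have "rnd (ls (\<rho> k') v) < i" using k'(2,3) rnd_mono[of k' "Suc k'" v] by simp
    then have "Suc k' \<le> k" using assms(2) rnd_mono[of k k' v] by fastforce
    then show ?thesis using now_mono k'(1) t(2) by fastforce
  qed
qed

lemma enters_round:
  assumes "v \<in> Hon c"
  obtains k t p where "Ti \<le> t" "t \<le> Ti + D c" "now (\<rho> k) = t" "rnd (ls (\<rho> k) v) = i"
    "ph (ls (\<rho> k) v) = (if v = u then Cre (t + CT c) else Wt (t + RT c) False)"
    "(t, v, u, Permit v i p) \<in> flight (\<rho> k)"
proof -
  obtain t where t: "starts_round \<rho> v i t" "Ti \<le> t" "t \<le> Ti + D c"
    using unified assms unfolding unified_def by blast
  show ?thesis
  proof (cases "i = 0 \<and> t = 0")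
    case True
    with t assms creator_honest show ?thesis
      by (intro that[where k=0 and t=t and p="{|Genesis|}"]) (auto simp: run_init init_simps)
  next
    case False
    then obtain k where k: "now (\<rho> (Suc k)) = t" "rnd (ls (\<rho> k) v) \<noteq> i"
      "rnd (ls (\<rho> (Suc k)) v) = i"
      using t(1) unfolding starts_round_def by blast
    obtain s' out where "v \<in> Hon c" and L: "lact c (now (\<rho> k)) v (ls (\<rho> k) v) s' out"
      and s': "ls (\<rho> (Suc k)) v = s'"
      and g': "\<rho> (Suc k) = emit c v out ((\<rho> k)\<lparr>ls := (ls (\<rho> k))(v := s')\<rparr>)"
      by (rule step_local_change[OF run_step]) (use k in auto)
    from L show ?thesis
    proof (cases rule: lact_cases)
      case (enter d b r q X)
      with k s' g' creator_honest show ?thesis by (intro that[where k="Suc k" and t=t and p=q] t(2,3)) auto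
    qed (use k s' in auto)
  qed
qed

lemma creator_permit_quorum:
  assumes "Ti + 2 * D c < now (\<rho> k)"
  shows "2 * F c + 1 \<le> card (fst ` permit_pairs c (inbox (ls (\<rho> k) u)) i)"
proof -
  let ?A = "fst ` permit_pairs c (inbox (ls (\<rho> k) u)) i"
  have "Hon c \<subseteq> ?A"
  proof
    fix v assume v: "v \<in> Hon c"
    obtain kv t p where E: "Ti \<le> t" "t \<le> Ti + D c" "now (\<rho> kv) = t"
      "(t, v, u, Permit v i p) \<in> flight (\<rho> kv)"
      using enters_round[OF v] by metis
    have "kv \<le> k" using now_mono[of k kv] E assms wf by (force simp: wf_cfg_def)
    moreover have "max t (GST c) + D c < now (\<rho> k)" using E synchronous assms by simp
    ultimately have "Permit v i p \<in> inbox (ls (\<rho> k) u)"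
      using received_after_deadline[OF E(4)] v creator_honest by blast
    moreover have "v < N c" using v wf by (auto simp: wf_cfg_def)
    ultimately have "(v, p) \<in> permit_pairs c (inbox (ls (\<rho> k) u)) i"
      by (simp add: permit_pairs_def)
    then show "v \<in> ?A" by force
  qed
  moreover have "finite ?A" by (rule finite_subset[of _ "{..<N c}"]) (auto simp: permit_pairs_def)
  ultimately have "card (Hon c) \<le> card ?A" by (rule card_mono[rotated])
  with wf show ?thesis unfolding wf_cfg_def by linarith
qed

end

locale silent_creator = unified_run +
  assumes silent: "\<forall>k t j m. (t, u, j, m) \<in> sent (\<rho> k) \<longrightarrow> \<not> block_or_proposal_of i m"
begin

abbreviation "deadline \<equiv> Ti + RT c"

lemma silent_broadcast_safe:
  assumes "v \<in> Hon c" "ph (ls (\<rho> k) v) = Cre d" "rnd (ls (\<rho> k) v) \<le> i"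
    "\<rho> (Suc k) = emit c v (bcast c m) g" "block_or_proposal_of (rnd (ls (\<rho> k) v)) m"
  shows "rnd (ls (\<rho> k) v) < i" "safe_output c i (bcast c m)"
proof -
  show below: "rnd (ls (\<rho> k) v) < i"
  proof (rule ccontr)
    assume "\<not> rnd (ls (\<rho> k) v) < i"
    then have round: "rnd (ls (\<rho> k) v) = i" using assms(3) by simp
    moreover have "v = rnd (ls (\<rho> k) v) mod N c"
      using creator_invar_run[of k] assms(1,2) unfolding creator_invar_def by blast
    moreover have "0 < N c" using wf by (simp add: wf_cfg_def)
    ultimately have "(now g, u, 0, m) \<in> sent (\<rho> (Suc k))" using assms(4) by (simp add: bcast_def)
    with silent assms(5) round show False by blast
  qed
  with assms(5) show "safe_output c i (bcast c m)" by (rule safe_output_bcast_block_or_proposal)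
qed

lemma honest_action_safe:
  assumes quiet: "quiet_until c i deadline (\<rho> k)" and early: "now (\<rho> k) < deadline"
    and v: "v \<in> Hon c" and L: "lact c (now (\<rho> k)) v (ls (\<rho> k) v) s' out"
    and g': "\<rho> (Suc k) = emit c v out ((\<rho> k)\<lparr>ls := (ls (\<rho> k))(v := s')\<rparr>)"
  shows "rnd s' \<le> i \<and> safe_output c i out
    \<and> (rnd s' = i \<longrightarrow> (\<forall>d b. ph s' = Wt d b \<longrightarrow> deadline \<le> d \<and> \<not> b))"
proof -
  let ?s = "ls (\<rho> k) v"
  have rnd_le: "rnd ?s \<le> i" using quiet v unfolding quiet_until_def by blast
  have inbox: "\<forall>m \<in> inbox ?s. pre_round_msg c i m" using quiet unfolding quiet_until_def by blast
  have fresh: "deadline \<le> now (\<rho> k) + RT c" if "rnd s' = i"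
    using round_start_le_now[OF v, of "Suc k"] that g' by simp
  from L show ?thesis
  proof (cases rule: lact_cases)
    case (block d p S)
    with silent_broadcast_safe[OF v block(1) rnd_le g'[unfolded block(4)]] show ?thesis
      by (simp add: block_or_proposal_of_def)
  next
    case (creator_timeout d)
    then consider "out = {}" | q P where "out = bcast c (Proposal (rnd ?s) q P)" by blast
    then have "safe_output c i out"
      by cases (use silent_broadcast_safe(2)[OF v creator_timeout(1) rnd_le] g' in
          \<open>auto simp: block_or_proposal_of_def\<close>)
    with creator_timeout rnd_le fresh show ?thesis by simp
  next
    case (stop d)
    with rnd_le fresh show ?thesis by simp
  next
    case (enter d b r q X)
    have "r < i" using pre_round_no_evidence[OF wf inbox enter(3)] .
    with enter creator_honest fresh show ?thesis by (simp add: safe_output_enter)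
  next
    case (round_timeout d)
    have "rnd ?s \<noteq> i"
    proof
      assume "rnd ?s = i"
      then have "deadline \<le> d" using quiet v round_timeout(1) unfolding quiet_until_def by blast
      with round_timeout(2) early show False by simp
    qed
    with round_timeout rnd_le show ?thesis
      by (auto intro: safe_output_bcast simp: honest_sigs_below_def)
  qed
qed

lemma quiet_until_step:
  assumes quiet: "quiet_until c i deadline (\<rho> k)" and early: "now (\<rho> (Suc k)) < deadline"
  shows "quiet_until c i deadline (\<rho> (Suc k))"
  using run_step[of k]
proof cases
  case (honest v s' out)
  with early have "now (\<rho> k) < deadline" by simp
  with honest_action_safe[OF quiet _ honest(2,3,1)] show ?thesis
    unfolding honest(1) using quiet_until_emit[OF quiet _ lact_inbox[OF honest(3)]] by blast
next
  case (deliver t a j m)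
  have "pre_round_msg c i m" using quiet deliver(2) unfolding quiet_until_def by fast
  with deliver(1) show ?thesis by (intro quiet_until_frame[OF quiet]) (auto split: if_splits)
next
  case (byz b j m)
  have "pre_round_msg c i m"
    using quiet byz(5) unfolding quiet_until_def pre_round_msg_def honest_sigs_below_def by blast
  with byz(1) show ?thesis by (intro quiet_until_frame[OF quiet]) auto
next
  case (tick t')
  then show ?thesis by (intro quiet_until_frame[OF quiet]) auto
qed

lemma quiet_until_init: "quiet_until c i deadline (\<rho> 0)"
proof -
  have "i = 0 \<Longrightarrow> Ti \<le> 0"
    using round_start_le_now[OF creator_honest, of 0] by (simp add: run_init init_simps)
  with creator_honest show ?thesis
    by (cases "i = 0")
      (auto simp: quiet_until_def run_init init_simps lst0_def pre_round_msg_def honest_sigs_below_def)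
qed

lemma quiet_before_deadline: "now (\<rho> k) < deadline \<Longrightarrow> quiet_until c i deadline (\<rho> k)"
proof (induction k)
  case (Suc k)
  then show ?case using now_mono[of k "Suc k"] quiet_until_step by simp
qed (use quiet_until_init in simp)

lemma silent_creator_impossible: False
proof -
  obtain k0 t where t: "Ti \<le> t" "t \<le> Ti + D c" "rnd (ls (\<rho> k0) u) = i"
    "ph (ls (\<rho> k0) u) = Cre (t + CT c)"
    by (rule enters_round[OF creator_honest]) auto
  define d where "d = t + CT c"
  obtain k where k: "ph (ls (\<rho> k) u) = Cre d" "rnd (ls (\<rho> k) u) = i"
    and leaves: "\<not> (ph (ls (\<rho> (Suc k)) u) = Cre d \<and> rnd (ls (\<rho> (Suc k)) u) = i)"
    using creator_phase_ends[OF creator_honest, of k0 d i] t(3,4) unfolding d_def by auto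
  have "now (\<rho> k) \<le> d"
    using creator_invar_run[of k] creator_honest k(1) unfolding creator_invar_def by blast
  then have early: "now (\<rho> k) < deadline" using t(2) wf unfolding d_def wf_cfg_def by simp
  have inbox: "\<forall>m \<in> inbox (ls (\<rho> k) u). pre_round_msg c i m"
    using quiet_before_deadline[OF early] unfolding quiet_until_def by blast
  obtain s' out where "u \<in> Hon c" and L: "lact c (now (\<rho> k)) u (ls (\<rho> k) u) s' out"
    and "ls (\<rho> (Suc k)) u = s'" and g': "\<rho> (Suc k) = emit c u out ((\<rho> k)\<lparr>ls := (ls (\<rho> k))(u := s')\<rparr>)"
    by (rule step_local_change[OF run_step]) (use k leaves in auto)
  have no_bcast: "\<not> block_or_proposal_of i m" if "out = bcast c m" for m
    using silent_broadcast_safe(1)[OF creator_honest k(1) _ g'[unfolded that]] k(2) by auto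
  from L show False
  proof (cases rule: lact_cases)
    case (block d' p S)
    with no_bcast[OF block(4)] k(2) show False by (simp add: block_or_proposal_of_def)
  next
    case (creator_timeout d')
    with k(1) have "Ti + 2 * D c < now (\<rho> k)" using t(1) wf unfolding d_def wf_cfg_def by simp
    with creator_timeout(5) k(2) obtain q P where "out = bcast c (Proposal i q P)"
      using creator_permit_quorum by fastforce
    from no_bcast[OF this] show False by (simp add: block_or_proposal_of_def)
  next
    case (stop d')
    with pre_round_no_later_evidence[OF wf inbox] k(2) show False by simp
  qed (use k(1) in simp_all)
qed

end

theorem lemma10:
  assumes "wf_cfg c"
      and "execution c \<rho>"
      and "GST c \<le> round_start c \<rho> i"
      and "unified c \<rho> i"
      and "i mod N c \<in> Hon c"
  shows "\<exists>k t j m. (t, i mod N c, j, m) \<in> sent (\<rho> k) \<and> block_or_proposal_of i m"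
proof (rule ccontr)
  assume "\<not> ?thesis"
  then interpret silent_creator c \<rho> i
    using assms by unfold_locales auto
  show False by (rule silent_creator_impossible)
qed

end
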